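(* For any simple undirected graph $G$ with $n$ vertices, $$\Phi_2=\sum_{\{st,uv\}\in Q}(k_s+k_t)(k_u+k_v)=\frac12\sum_{st\in E}(k_s+k_t)\Big(n\langle k^2\rangle-(\xi(s)+\xi(t))-k_s(k_s-1)-k_t(k_t-1)\Big).$$
   Context: $k_x$ is the degree of $x$, $\langle k^2\rangle=\frac1n\sum_x k_x^2$, $\xi(s)=\sum_{t\in\Gamma(s)}k_t$ is the sum of the degrees of the neighbours of $s$. $Q$ is the set of unordered pairs $\{st,uv\}$ of edges with $s,t,u,v$ pairwise distinct. *)

theory Defs
  imports Complex_Main
begin

definition simple_graph :: "'a set \<Rightarrow> 'a set set \<Rightarrow> bool" where
  "simple_graph V E \<longleftrightarrow> finite V \<and> (\<forall>e\<in>E. e \<subseteq> V \<and> card e = 2)"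

definition deg :: "'a set set \<Rightarrow> 'a \<Rightarrow> nat" where
  "deg E x = card {e\<in>E. x \<in> e}"

definition nbhd :: "'a set set \<Rightarrow> 'a \<Rightarrow> 'a set" where
  "nbhd E s = {t. {s, t} \<in> E}"

definition xi :: "'a set set \<Rightarrow> 'a \<Rightarrow> nat" where
  "xi E s = (\<Sum>t\<in>nbhd E s. deg E t)"

definition mean_sq_deg :: "'a set \<Rightarrow> 'a set set \<Rightarrow> real" where
  "mean_sq_deg V E = (1 / real (card V)) * (\<Sum>x\<in>V. real (deg E x) ^ 2)"

definition Qpairs :: "'a set set \<Rightarrow> 'a set set set" where
  "Qpairs E = {{e1, e2} | e1 e2 s t u v. e1 \<in> E \<and> e2 \<in> E \<and> e1 = {s, t} \<and> e2 = {u, v}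
      \<and> s \<noteq> t \<and> s \<noteq> u \<and> s \<noteq> v \<and> t \<noteq> u \<and> t \<noteq> v \<and> u \<noteq> v}"

end

theory Submission
  imports Defs
begin

text \<open>Write \<open>w(uv) = k\<^sub>u + k\<^sub>v\<close>. Each pair in \<open>Q\<close> arises twice as an ordered pair
  \<open>(e, f)\<close> of disjoint edges, so \<open>\<Phi>\<^sub>2\<close> is half the sum over edges \<open>e\<close> of \<open>w(e)\<close> times
  the total weight of the edges disjoint from \<open>e\<close>. All edges together weigh
  \<open>\<Sum>\<^sub>x k\<^sub>x\<^sup>2 = n\<langle>k\<^sup>2\<rangle>\<close>, and the edges at a vertex \<open>s\<close> weigh \<open>k\<^sub>s\<^sup>2 + \<xi>(s)\<close>; for
  \<open>e = st\<close>, inclusion-exclusion over the common edge \<open>st\<close> therefore leaves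
  \<open>n\<langle>k\<^sup>2\<rangle> - \<xi>(s) - \<xi>(t) - k\<^sub>s(k\<^sub>s - 1) - k\<^sub>t(k\<^sub>t - 1)\<close> for the edges disjoint from \<open>e\<close>.\<close>

lemma simple_graph_finite_edges: "simple_graph V E \<Longrightarrow> finite E"
  unfolding simple_graph_def by (meson PowI finite_Pow_iff rev_finite_subset subsetI)

lemma simple_graph_edgeE:
  assumes "simple_graph V E" "e \<in> E"
  obtains a b where "a \<noteq> b" "e = {a, b}"
  using assms unfolding simple_graph_def by (metis card_2_iff)

lemma simple_graph_edge_eq:
  assumes "simple_graph V E" "e \<in> E" "a \<in> e" "b \<in> e" "a \<noteq> b"
  shows "e = {a, b}"
  using assms unfolding simple_graph_def by (auto simp: card_2_iff)

lemma card_mult_mean_sq_deg: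
  assumes "finite V"
  shows "real (card V) * mean_sq_deg V E = (\<Sum>x\<in>V. real (deg E x) ^ 2)"
  using assms by (cases "V = {}") (simp_all add: mean_sq_deg_def)

lemma sum_ordered_endpoints:
  assumes "a \<noteq> b"
  shows "(\<Sum>(s, t) \<in> {(s, t). {a, b} = {s, t} \<and> s \<noteq> t}. g s t) = g a b + g b a"
proof -
  have "{(s, t). {a, b} = {s, t} \<and> s \<noteq> t} = {(a, b), (b, a)}"
    using assms by (auto simp: doubleton_eq_iff)
  then show ?thesis using assms by simp
qed

lemma sum_edge_deg_sums:
  assumes "simple_graph V E"
  shows "(\<Sum>f\<in>E. \<Sum>x\<in>f. deg E x) = (\<Sum>x\<in>V. deg E x ^ 2)"
proof -
  have "finite V" "finite E"
    using assms simple_graph_finite_edges by (auto simp: simple_graph_def)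
  have "(\<Sum>f\<in>E. \<Sum>x\<in>f. deg E x) = (\<Sum>f\<in>E. \<Sum>x\<in>{x\<in>V. x \<in> f}. deg E x)"
    using assms by (intro sum.cong refl arg_cong[where f="sum _"]) (auto simp: simple_graph_def)
  also have "\<dots> = (\<Sum>x\<in>V. \<Sum>f\<in>{f\<in>E. x \<in> f}. deg E x)"
    using \<open>finite E\<close> \<open>finite V\<close> by (rule sum.swap_restrict)
  also have "\<dots> = (\<Sum>x\<in>V. deg E x ^ 2)"
    by (simp add: deg_def power2_eq_square)
  finally show ?thesis .
qed

lemma incident_edges_eq_image_nbhd:
  assumes "simple_graph V E"
  shows "{f\<in>E. s \<in> f} = (\<lambda>t. {s, t}) ` nbhd E s"
proof (intro equalityI subsetI)
  fix f assume f: "f \<in> {f\<in>E. s \<in> f}"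
  then obtain a b where "a \<noteq> b" "f = {a, b}" using simple_graph_edgeE[OF assms] by blast
  with f obtain t where "f = {s, t}" by auto
  with f show "f \<in> (\<lambda>t. {s, t}) ` nbhd E s" by (auto simp: nbhd_def)
qed (auto simp: nbhd_def)

lemma nbhd_neq:
  assumes "simple_graph V E" "t \<in> nbhd E s"
  shows "s \<noteq> t"
  using assms by (auto simp: nbhd_def simple_graph_def)

lemma sum_incident_edge_deg_sums:
  assumes "simple_graph V E"
  shows "(\<Sum>f\<in>{f\<in>E. s \<in> f}. \<Sum>x\<in>f. deg E x) = deg E s ^ 2 + xi E s"
proof -
  have inj: "inj_on (\<lambda>t. {s, t}) (nbhd E s)"
    by (rule inj_onI) (metis doubleton_eq_iff)
  note incident = incident_edges_eq_image_nbhd[OF assms]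
  have card_nbhd: "card (nbhd E s) = deg E s"
    unfolding deg_def incident card_image[OF inj] ..
  have "(\<Sum>f\<in>{f\<in>E. s \<in> f}. \<Sum>x\<in>f. deg E x) = (\<Sum>t\<in>nbhd E s. \<Sum>x\<in>{s, t}. deg E x)"
    unfolding incident sum.reindex[OF inj] by simp
  also have "\<dots> = (\<Sum>t\<in>nbhd E s. deg E s + deg E t)"
    using nbhd_neq[OF assms] by (intro sum.cong refl) simp
  also have "\<dots> = deg E s ^ 2 + xi E s"
    by (simp add: sum.distrib xi_def card_nbhd power2_eq_square)
  finally show ?thesis .
qed

lemma sum_disjoint_edge_deg_sums:
  assumes "simple_graph V E" "{a, b} \<in> E" "a \<noteq> b"
  shows "(\<Sum>f\<in>{f\<in>E. {a, b} \<inter> f = {}}. real (\<Sum>x\<in>f. deg E x))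
    = (\<Sum>x\<in>V. real (deg E x) ^ 2) - (real (xi E a) + real (xi E b))
      - real (deg E a) * (real (deg E a) - 1) - real (deg E b) * (real (deg E b) - 1)"
proof -
  let ?w = "\<lambda>f. real (\<Sum>x\<in>f. deg E x)"
  let ?A = "{f\<in>E. a \<in> f}" and ?B = "{f\<in>E. b \<in> f}"
  have "finite E" using simple_graph_finite_edges[OF assms(1)] .
  have common: "?A \<inter> ?B = {{a, b}}"
    using assms simple_graph_edge_eq[OF assms(1)] by blast
  have "sum ?w {f\<in>E. {a, b} \<inter> f = {}} = sum ?w (E - (?A \<union> ?B))"
    by (rule sum.cong) auto
  also have "\<dots> = sum ?w E - (sum ?w ?A + sum ?w ?B - sum ?w (?A \<inter> ?B))"
    using \<open>finite E\<close> by (subst sum_diff, auto simp: sum_Un)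
  also have "sum ?w (?A \<inter> ?B) = real (deg E a) + real (deg E b)"
    using common assms(3) by simp
  finally show ?thesis
    using sum_incident_edge_deg_sums[OF assms(1), of a] sum_incident_edge_deg_sums[OF assms(1), of b]
      sum_edge_deg_sums[OF assms(1)]
    by (simp add: power2_eq_square algebra_simps flip: of_nat_sum) (simp add: of_nat_sum)
qed

lemma Qpairs_eq_disjoint_pairs:
  assumes "simple_graph V E"
  shows "Qpairs E = (\<lambda>(e, f). {e, f}) ` (SIGMA e:E. {f\<in>E. e \<inter> f = {}})"
proof (intro equalityI subsetI)
  fix p assume "p \<in> (\<lambda>(e, f). {e, f}) ` (SIGMA e:E. {f\<in>E. e \<inter> f = {}})"
  then obtain e f where ef: "e \<in> E" "f \<in> E" "e \<inter> f = {}" "p = {e, f}" by auto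
  obtain s t where "s \<noteq> t" "e = {s, t}" using simple_graph_edgeE[OF assms ef(1)] .
  moreover obtain u v where "u \<noteq> v" "f = {u, v}" using simple_graph_edgeE[OF assms ef(2)] .
  ultimately show "p \<in> Qpairs E" unfolding Qpairs_def using ef by blast
next
  fix p assume "p \<in> Qpairs E"
  then obtain s t u v where "{s, t} \<in> E" "{u, v} \<in> E" "p = {{s, t}, {u, v}}"
      "s \<noteq> u" "s \<noteq> v" "t \<noteq> u" "t \<noteq> v"
    unfolding Qpairs_def by blast
  then show "p \<in> (\<lambda>(e, f). {e, f}) ` (SIGMA e:E. {f\<in>E. e \<inter> f = {}})"
    by (auto intro!: image_eqI[where x="({s, t}, {u, v})"])
qed

lemma sum_Qpairs_prod:
  fixes w :: "'a set \<Rightarrow> 'b :: field_char_0"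
  assumes "simple_graph V E"
  shows "(\<Sum>p\<in>Qpairs E. \<Prod>e\<in>p. w e)
    = (1/2) * (\<Sum>e\<in>E. \<Sum>f\<in>{f\<in>E. e \<inter> f = {}}. w e * w f)"
proof -
  define D where "D = (SIGMA e:E. {f\<in>E. e \<inter> f = {}})"
  let ?pair = "\<lambda>(e, f). {e, f}"
  have "finite D" unfolding D_def using simple_graph_finite_edges[OF assms] by auto
  have Q: "Qpairs E = ?pair ` D"
    unfolding D_def by (rule Qpairs_eq_disjoint_pairs[OF assms])
  have fibre: "(\<Sum>q\<in>{q\<in>D. ?pair q = p}. case q of (e, f) \<Rightarrow> w e * w f) = 2 * (\<Prod>e\<in>p. w e)"
    if p: "p \<in> ?pair ` D" for p
  proof -
    obtain e f where ef: "e \<in> E" "f \<in> E" "e \<inter> f = {}" "p = {e, f}"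
      using p unfolding D_def by blast
    have "e \<noteq> f" using ef simple_graph_edgeE[OF assms ef(1)] by blast
    have "{q\<in>D. ?pair q = p} = {(e, f), (f, e)}"
      using ef unfolding D_def by (auto simp: doubleton_eq_iff)
    then show ?thesis using \<open>e \<noteq> f\<close> ef(4) by simp
  qed
  have "(\<Sum>e\<in>E. \<Sum>f\<in>{f\<in>E. e \<inter> f = {}}. w e * w f) = (\<Sum>(e, f)\<in>D. w e * w f)"
    unfolding D_def using simple_graph_finite_edges[OF assms] by (intro sum.Sigma) auto
  also have "\<dots> = (\<Sum>p\<in>?pair ` D. \<Sum>q\<in>{q\<in>D. ?pair q = p}. case q of (e, f) \<Rightarrow> w e * w f)"
    using \<open>finite D\<close> by (rule sum.image_gen)
  also have "\<dots> = 2 * (\<Sum>p\<in>Qpairs E. \<Prod>e\<in>p. w e)"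
    unfolding Q by (simp add: fibre sum_distrib_left)
  finally show ?thesis by simp
qed

theorem proposition8:
  fixes V :: "'a set" and E :: "'a set set"
  assumes "simple_graph V E"
  shows "(\<Sum>p\<in>Qpairs E. \<Prod>e\<in>p. real (\<Sum>x\<in>e. deg E x))
    = (1/2) * (\<Sum>st\<in>E. \<Sum>(s, t) \<in> {(s, t). st = {s, t} \<and> s \<noteq> t}.
         (1/2) * ((real (deg E s) + real (deg E t))
            * (real (card V) * mean_sq_deg V E - (real (xi E s) + real (xi E t))
               - real (deg E s) * (real (deg E s) - 1) - real (deg E t) * (real (deg E t) - 1))))"
  unfolding sum_Qpairs_prod[OF assms]
proof (intro arg_cong[where f="\<lambda>x. (1/2) * x"] sum.cong refl)
  fix e assume "e \<in> E"
  then obtain a b where ab: "a \<noteq> b" "e = {a, b}" using simple_graph_edgeE[OF assms] by blast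
  have "finite V" using assms by (simp add: simple_graph_def)
  show "(\<Sum>f\<in>{f\<in>E. e \<inter> f = {}}. real (\<Sum>x\<in>e. deg E x) * real (\<Sum>x\<in>f. deg E x)) =
    (\<Sum>(s, t) \<in> {(s, t). e = {s, t} \<and> s \<noteq> t}. (1/2) * ((real (deg E s) + real (deg E t))
        * (real (card V) * mean_sq_deg V E - (real (xi E s) + real (xi E t))
           - real (deg E s) * (real (deg E s) - 1) - real (deg E t) * (real (deg E t) - 1))))"
    unfolding ab(2) sum_ordered_endpoints[OF ab(1)] card_mult_mean_sq_deg[OF \<open>finite V\<close>]
      sum_distrib_left[symmetric] sum_disjoint_edge_deg_sums[OF assms \<open>e \<in> E\<close>[unfolded ab(2)] ab(1)]
    using ab(1) by (simp add: algebra_simps)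
qed

end
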